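(* Let $G=(L\cup R,E)$ be a left-regular Tanner graph (without parallel edges) with left degree $d_l\ge 3$ and girth $g>4$. Let $\mathcal{S}\subset L$ be an $(a,b)$ trapping set with $b<a$ and $G(\mathcal{S})$ connected. Consider three cases: (E) $\mathcal{S}$ is elementary and $d_l(d_l-1)>b$; (O) $\mathcal{S}$ has a check node in $\Gamma_{\mathrm{o}}(\mathcal{S})$ of degree $d_o>1$ in $G(\mathcal{S})$, and $d_o(d_l-1)>b$; (Ev) $\mathcal{S}$ has a check node in $\Gamma_{\mathrm{e}}(\mathcal{S})$ of degree $d_e>2$ in $G(\mathcal{S})$, and $d_e(d_l-1)>b$. (Empty sums are $0$.) (a) If $g=4k$ for an integer $k>1$, then in case (E) \[a\ge 1+d_l+(d_l(d_l-1)-b)\sum_{i=0}^{k-3}(d_l-1)^i+\frac{(d_l(d_l-1)-b)(d_l-1)^{k-2}}{d_l};\] in case (O) $a\ge d_o+(d_o(d_l-1)-b+1)\sum_{i=0}^{k-2}(d_l-1)^i$; and in case (Ev) $a\ge d_e+(d_e(d_l-1)-b)\sum_{i=0}^{k-2}(d_l-1)^i$. (b) If $g=4k+2$ for a positive integer $k$, then in case (E) $a\ge 1+d_l+(d_l(d_l-1)-b)\sum_{i=0}^{k-2}(d_l-1)^i$; in case (O) \[a\ge d_o+(d_o(d_l-1)-b+1)\sum_{i=0}^{k-2}(d_l-1)^i+\frac{(d_o(d_l-1)-b+1)(d_l-1)^{k-1}}{d_l};\] and in case (Ev) \[a\ge d_e+(d_e(d_l-1)-b)\sum_{i=0}^{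k-2}(d_l-1)^i+\frac{(d_e(d_l-1)-b)(d_l-1)^{k-1}}{d_l}.\]
   Context: A Tanner graph is a bipartite graph $G=(L\cup R,E)$ with variable nodes $L$ and check nodes $R$; left-regular with left degree $d_l$ means every variable node has degree $d_l$; the girth is the length of a shortest cycle. For $\mathcal{S}\subset L$, $\Gamma(\mathcal{S})$ is the set of neighbors of $\mathcal{S}$ in $R$, and $G(\mathcal{S})$ is the induced subgraph on $\mathcal{S}\cup\Gamma(\mathcal{S})$. $\Gamma_{\mathrm{o}}(\mathcal{S})$ and $\Gamma_{\mathrm{e}}(\mathcal{S})$ are the check nodes of $\Gamma(\mathcal{S})$ with odd, respectively even, degree in $G(\mathcal{S})$. $\mathcal{S}$ is an $(a,b)$ trapping set if $|\mathcal{S}|=a$ and $|\Gamma_{\mathrm{o}}(\mathcal{S})|=b$; it is elementary if every check node of $G(\mathcal{S})$ has degree one or two in $G(\mathcal{S})$. *)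

theory Defs
  imports Complex_Main
begin

text \<open>A Tanner graph: variable nodes L, check nodes R, edge set E \<subseteq> L \<times> R
  (a set of pairs, hence no parallel edges).\<close>

definition tanner_graph :: "'v set \<Rightarrow> 'c set \<Rightarrow> ('v \<times> 'c) set \<Rightarrow> bool" where
  "tanner_graph L R E \<longleftrightarrow> finite L \<and> finite R \<and> E \<subseteq> L \<times> R"

definition left_regular :: "'v set \<Rightarrow> ('v \<times> 'c) set \<Rightarrow> nat \<Rightarrow> bool" where
  "left_regular L E dl \<longleftrightarrow> (\<forall>v\<in>L. card {c. (v, c) \<in> E} = dl)"

fun tadj :: "('v \<times> 'c) set \<Rightarrow> ('v + 'c) \<Rightarrow> ('v + 'c) \<Rightarrow> bool" where
  "tadj E (Inl v) (Inr c) \<longleftrightarrow> (v, c) \<in> E"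
| "tadj E (Inr c) (Inl v) \<longleftrightarrow> (v, c) \<in> E"
| "tadj E _ _ \<longleftrightarrow> False"

definition is_cycle :: "('v \<times> 'c) set \<Rightarrow> ('v + 'c) list \<Rightarrow> bool" where
  "is_cycle E xs \<longleftrightarrow> length xs \<ge> 3 \<and> distinct xs \<and>
     (\<forall>i < length xs. tadj E (xs ! i) (xs ! ((i + 1) mod length xs)))"

definition has_girth :: "('v \<times> 'c) set \<Rightarrow> nat \<Rightarrow> bool" where
  "has_girth E g \<longleftrightarrow> (\<exists>xs. is_cycle E xs \<and> length xs = g) \<and>
     (\<forall>xs. is_cycle E xs \<longrightarrow> g \<le> length xs)"

definition nbhd :: "('v \<times> 'c) set \<Rightarrow> 'v set \<Rightarrow> 'c set" where
  "nbhd E S = {c. \<exists>v\<in>S. (v, c) \<in> E}"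

definition sdeg :: "('v \<times> 'c) set \<Rightarrow> 'v set \<Rightarrow> 'c \<Rightarrow> nat" where
  "sdeg E S c = card {v\<in>S. (v, c) \<in> E}"

definition odd_nbhd :: "('v \<times> 'c) set \<Rightarrow> 'v set \<Rightarrow> 'c set" where
  "odd_nbhd E S = {c\<in>nbhd E S. odd (sdeg E S c)}"

definition even_nbhd :: "('v \<times> 'c) set \<Rightarrow> 'v set \<Rightarrow> 'c set" where
  "even_nbhd E S = {c\<in>nbhd E S. even (sdeg E S c)}"

definition trapping_set :: "'v set \<Rightarrow> ('v \<times> 'c) set \<Rightarrow> 'v set \<Rightarrow> nat \<Rightarrow> nat \<Rightarrow> bool" where
  "trapping_set L E S a b \<longleftrightarrow> S \<subseteq> L \<and> card S = a \<and> card (odd_nbhd E S) = b"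

definition elementary :: "('v \<times> 'c) set \<Rightarrow> 'v set \<Rightarrow> bool" where
  "elementary E S \<longleftrightarrow> (\<forall>c\<in>nbhd E S. sdeg E S c = 1 \<or> sdeg E S c = 2)"

definition induced_connected :: "('v \<times> 'c) set \<Rightarrow> 'v set \<Rightarrow> bool" where
  "induced_connected E S \<longleftrightarrow>
     (let V = Inl ` S \<union> Inr ` nbhd E S in
      \<forall>x\<in>V. \<forall>y\<in>V. (\<lambda>u w. u \<in> V \<and> w \<in> V \<and> tadj E u w)\<^sup>*\<^sup>* x y)"

end

theory Submission
  imports Defs
begin

text \<open>Grow the tree of non-backtracking walks of G(S) from a root: an odd check of degree
  d_o, an even check of degree d_e, or, in the elementary case, a variable node none of whose checks
  is odd (it exists because b < a). Two distinct walks from the root with a common end close a cycle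
  of length at most the sum of their lengths, so below half the girth distinct walks end at distinct
  nodes: the walks of the variable layers number at most a, and those ending at odd checks at most b.
  A walk ending at a variable node has d_l - 1 continuations, one ending at an even check at least
  one, so the variable layers obey V(j+1) \<ge> (d_l - 1) V(j) - Q(j), where Q counts walks to odd
  checks; summing the resulting geometric lower bounds gives the claims. In the remaining residue of
  g modulo 4 one further variable layer fits below the girth, but only up to multiplicity d_l, which
  yields the fractional term.\<close>

section \<open>Non-backtracking walks and cycles\<close>

lemma tadj_irrefl: "\<not> tadj E x x"
  by (cases x) auto

lemma tadj_sym: "tadj E x y \<longleftrightarrow> tadj E y x"
  by (cases x; cases y) auto

definition walk :: "('v \<times> 'c) set \<Rightarrow> ('v + 'c) list \<Rightarrow> bool" where
  "walk E xs \<longleftrightarrow> xs \<noteq> [] \<and> successively (tadj E) xs"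

definition non_backtracking :: "'a list \<Rightarrow> bool" where
  "non_backtracking xs \<longleftrightarrow> (\<forall>i. Suc (Suc i) < length xs \<longrightarrow> xs ! i \<noteq> xs ! Suc (Suc i))"

lemma walk_nth: "walk E xs \<Longrightarrow> Suc i < length xs \<Longrightarrow> tadj E (xs ! i) (xs ! Suc i)"
  unfolding walk_def by (blast intro: successively_nth)

lemma walk_rev: "walk E xs \<Longrightarrow> walk E (rev xs)"
  by (simp add: walk_def tadj_sym)

lemma walk_append:
  "walk E xs \<Longrightarrow> walk E ys \<Longrightarrow> tadj E (last xs) (hd ys) \<Longrightarrow> walk E (xs @ ys)"
  by (simp add: walk_def successively_append_iff)

lemma walk_butlast:
  assumes "walk E xs" "2 \<le> length xs"
  shows "walk E (butlast xs)"
proof -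
  have "xs = butlast xs @ [last xs]" "butlast xs \<noteq> []"
    using assms by (auto simp: walk_def simp flip: length_greater_0_conv)
  then show ?thesis using assms(1) unfolding walk_def by (metis successively_append_iff)
qed

lemma hd_butlast: "2 \<le> length xs \<Longrightarrow> hd (butlast xs) = hd xs"
  by (cases xs rule: remdups_adj.cases) auto

lemma non_backtracking_rev: "non_backtracking xs \<Longrightarrow> non_backtracking (rev xs)"
  unfolding non_backtracking_def
proof (intro allI impI)
  fix i assume "\<forall>i. Suc (Suc i) < length xs \<longrightarrow> xs ! i \<noteq> xs ! Suc (Suc i)"
    and i: "Suc (Suc i) < length (rev xs)"
  then have "xs ! (length xs - Suc (Suc (Suc i))) \<noteq> xs ! Suc (Suc (length xs - Suc (Suc (Suc i))))"
    by simp
  moreover have "Suc (Suc (length xs - Suc (Suc (Suc i)))) = length xs - Suc i" using i by simp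
  ultimately show "rev xs ! i \<noteq> rev xs ! Suc (Suc i)" using i by (simp add: rev_nth)
qed

lemma non_backtracking_butlast: "non_backtracking xs \<Longrightarrow> non_backtracking (butlast xs)"
  unfolding non_backtracking_def by (auto simp: nth_butlast)

lemma non_backtracking_append:
  assumes "non_backtracking xs" "non_backtracking ys" "xs \<noteq> []" "ys \<noteq> []"
    and "2 \<le> length xs \<Longrightarrow> xs ! (length xs - 2) \<noteq> hd ys"
    and "2 \<le> length ys \<Longrightarrow> last xs \<noteq> ys ! 1"
  shows "non_backtracking (xs @ ys)"
  unfolding non_backtracking_def
proof (intro allI impI)
  fix i assume i: "Suc (Suc i) < length (xs @ ys)"
  consider "Suc (Suc i) < length xs" | "Suc (Suc i) = length xs" | "Suc i = length xs"
    | "length xs \<le> i" by linarith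
  then show "(xs @ ys) ! i \<noteq> (xs @ ys) ! Suc (Suc i)"
  proof cases
    case 1
    then show ?thesis using assms(1) by (simp add: non_backtracking_def nth_append)
  next
    case 2
    then have "i = length xs - 2" by simp
    then show ?thesis using 2 assms(4,5) by (simp add: nth_append hd_conv_nth numeral_2_eq_2)
  next
    case 3
    then have "i = length xs - 1" by simp
    then show ?thesis using 3 assms(3,6) i by (simp add: nth_append last_conv_nth)
  next
    case 4
    then have "Suc (Suc i) - length xs = Suc (Suc (i - length xs))" by simp
    then show ?thesis using assms(2) i 4 by (simp add: non_backtracking_def nth_append)
  qed
qed

lemma cycle_of_repeat_free_segment:
  assumes w: "walk E xs" and nb: "non_backtracking xs" and ij: "i < j" "j < length xs"
    and eq: "xs ! i = xs ! j" and dist: "distinct (take (j - i) (drop i xs))"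
  shows "is_cycle E (take (j - i) (drop i xs))"
proof -
  define cy where "cy = take (j - i) (drop i xs)"
  have len: "length cy = j - i" and nth: "\<And>t. t < j - i \<Longrightarrow> cy ! t = xs ! (i + t)"
    using ij by (simp_all add: cy_def)
  have "j \<noteq> Suc i" using walk_nth[OF w, of i] eq tadj_irrefl ij by metis
  moreover have "j \<noteq> Suc (Suc i)" using nb eq ij by (auto simp: non_backtracking_def)
  ultimately have "3 \<le> length cy" using ij len by linarith
  moreover have "tadj E (cy ! t) (cy ! ((t + 1) mod length cy))" if t: "t < length cy" for t
  proof (cases "Suc t < length cy")
    case True
    then show ?thesis using walk_nth[OF w, of "i + t"] len nth ij by simp
  next
    case False
    then have "Suc (i + t) = j" "Suc t = j - i" using t len ij by simp_all
    then show ?thesis using walk_nth[OF w, of "i + t"] len nth[of 0] nth[of t] ij eq by simp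
  qed
  ultimately show ?thesis
    using dist unfolding is_cycle_def cy_def[symmetric] by blast
qed

lemma cycle_of_repeat:
  assumes w: "walk E xs" and nb: "non_backtracking xs" and ij: "i < j" "j < length xs"
    and eq: "xs ! i = xs ! j"
  shows "\<exists>cy. is_cycle E cy \<and> length cy \<le> j - i"
proof -
  define repeat_gap where
    "repeat_gap m \<longleftrightarrow> (\<exists>i j. i < j \<and> j < length xs \<and> xs ! i = xs ! j \<and> j - i = m)" for m
  have "repeat_gap (j - i)" using ij eq unfolding repeat_gap_def by blast
  then obtain m where "m \<le> j - i" and min: "\<forall>m' < m. \<not> repeat_gap m'" and gap: "repeat_gap m"
    using ex_least_nat_le by blast
  from gap obtain i' j' where ij': "i' < j'" "j' < length xs" "xs ! i' = xs ! j'" "j' - i' = m"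
    unfolding repeat_gap_def by blast
  define seg where "seg = take (j' - i') (drop i' xs)"
  have no_repeat: "seg ! s \<noteq> seg ! t" if st: "s < t" "t < m" for s t
  proof
    assume "seg ! s = seg ! t"
    then have "repeat_gap (t - s)"
      unfolding repeat_gap_def seg_def using ij' st
      by (intro exI[of _ "i' + s"] exI[of _ "i' + t"]) auto
    then show False using min st by auto
  qed
  have "length seg = m" using ij' by (simp add: seg_def)
  then have "distinct seg"
    unfolding distinct_conv_nth
  proof (intro allI impI)
    fix s t assume "s < length seg" "t < length seg" "s \<noteq> t"
    then show "seg ! s \<noteq> seg ! t"
      using no_repeat[of s t] no_repeat[of t s] \<open>length seg = m\<close> by (cases "s < t") auto
  qed
  then have "is_cycle E seg"
    using cycle_of_repeat_free_segment[OF w nb ij'(1-3)] by (simp add: seg_def)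
  then show ?thesis
    using \<open>length seg = m\<close> \<open>m \<le> j - i\<close> by auto
qed

lemma cycle_of_closed_walk:
  assumes "walk E xs" "non_backtracking xs" "hd xs = last xs" "2 \<le> length xs"
  shows "\<exists>cy. is_cycle E cy \<and> length cy < length xs"
proof -
  have "xs ! 0 = xs ! (length xs - 1)"
    using assms(3,4) by (simp add: hd_conv_nth last_conv_nth flip: length_greater_0_conv)
  moreover have "0 < length xs - 1" "length xs - 1 < length xs" using assms(4) by simp_all
  ultimately obtain cy where "is_cycle E cy" "length cy \<le> length xs - 1 - 0"
    using cycle_of_repeat[OF assms(1,2), of 0 "length xs - 1"] by blast
  then show ?thesis using assms(4) by (intro exI[of _ cy]) simp
qed

lemma join_non_backtracking_walks:
  assumes p: "walk E p" "non_backtracking p" and q: "walk E q" "non_backtracking q"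
    and last: "last p = last q" and len: "2 \<le> length p" "2 \<le> length q"
    and diverge: "p ! (length p - 2) \<noteq> q ! (length q - 2)"
  shows "walk E (butlast p @ rev q) \<and> non_backtracking (butlast p @ rev q)"
proof
  have last_butlast: "last (butlast p) = p ! (length p - 2)"
    using len by (simp add: last_conv_nth nth_butlast numeral_2_eq_2 flip: length_greater_0_conv)
  have hd_rev: "hd (rev q) = p ! (length p - 1)"
    using last len by (simp add: hd_rev last_conv_nth flip: length_greater_0_conv)
  have "tadj E (p ! (length p - 2)) (p ! Suc (length p - 2))"
    using walk_nth[OF p(1)] len by simp
  then show "walk E (butlast p @ rev q)"
    using len last_butlast hd_rev
    by (intro walk_append walk_butlast walk_rev p(1) q(1)) (simp_all add: Suc_diff_Suc numeral_2_eq_2)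
  show "non_backtracking (butlast p @ rev q)"
  proof (rule non_backtracking_append)
    show "non_backtracking (butlast p)" "non_backtracking (rev q)"
      using p(2) q(2) by (simp_all add: non_backtracking_butlast non_backtracking_rev)
    show "butlast p \<noteq> []" "rev q \<noteq> []"
      using len by (auto simp flip: length_greater_0_conv)
  next
    assume l: "2 \<le> length (butlast p)"
    then have "p ! (length p - 3) \<noteq> p ! Suc (Suc (length p - 3))"
      using p(2) by (simp add: non_backtracking_def)
    moreover have "Suc (Suc (length p - 3)) = length p - 1" using l by simp
    ultimately show "butlast p ! (length (butlast p) - 2) \<noteq> hd (rev q)"
      using l hd_rev by (simp add: nth_butlast numeral_3_eq_3)
  next
    show "last (butlast p) \<noteq> rev q ! 1"
      using len last_butlast diverge by (simp add: rev_nth numeral_2_eq_2)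
  qed
qed

lemma cycle_of_two_walks:
  "walk E p \<Longrightarrow> non_backtracking p \<Longrightarrow> walk E q \<Longrightarrow> non_backtracking q \<Longrightarrow>
   hd p = hd q \<Longrightarrow> last p = last q \<Longrightarrow> p \<noteq> q \<Longrightarrow>
   \<exists>cy. is_cycle E cy \<and> length cy + 2 \<le> length p + length q"
proof (induction "length p + length q" arbitrary: p q rule: less_induct)
  case less
  have closed: "\<exists>cy. is_cycle E cy \<and> length cy + 2 \<le> 1 + length xs"
    if "walk E xs" "non_backtracking xs" "hd xs = last xs" "xs \<noteq> [hd xs]" for xs
  proof -
    have "2 \<le> length xs"
      using that by (cases xs rule: remdups_adj.cases) (auto simp: walk_def)
    then show ?thesis using cycle_of_closed_walk[OF that(1-3)] by fastforce
  qed
  have ne: "p \<noteq> []" "q \<noteq> []" using less.prems by (auto simp: walk_def)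
  consider "length p = 1" | "length q = 1" | "2 \<le> length p" "2 \<le> length q"
    using ne by (fastforce simp flip: length_greater_0_conv)
  then show ?case
  proof cases
    case 1
    then have "p = [hd q]" using less.prems(5) ne by (cases p) auto
    then show ?thesis using closed[of q] less.prems 1 by auto
  next
    case 2
    then have "q = [hd p]" using less.prems(5) ne by (cases q) auto
    then have "hd p = last p" "p \<noteq> [hd p]" using less.prems(6,7) by auto
    then show ?thesis using closed[of p] less.prems(1,2) 2 by (auto simp: add.commute)
  next
    case 3
    show ?thesis
    proof (cases "p ! (length p - 2) = q ! (length q - 2)")
      case True
      have "p = butlast p @ [last p]" "q = butlast q @ [last q]" using ne by simp_all
      then have "butlast p \<noteq> butlast q" using less.prems(6,7) by metis
      moreover have "hd (butlast p) = hd q" "hd (butlast q) = hd q"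
        using 3 less.prems(5) by (simp_all add: hd_butlast)
      moreover have "last (butlast p) = last (butlast q)"
        using 3 True by (simp add: last_conv_nth nth_butlast numeral_2_eq_2 flip: length_greater_0_conv)
      ultimately have "\<exists>cy. is_cycle E cy \<and> length cy + 2 \<le> length (butlast p) + length (butlast q)"
        using 3 less.prems
        by (intro less.hyps) (auto simp: walk_butlast non_backtracking_butlast)
      then show ?thesis by auto
    next
      case False
      define z where "z = butlast p @ rev q"
      have z: "walk E z" "non_backtracking z"
        using join_non_backtracking_walks[OF less.prems(1-4,6) 3 False] by (simp_all add: z_def)
      have "butlast p \<noteq> []" using 3 by (auto simp flip: length_greater_0_conv)
      then have "hd z = last z" "length z = length p + length q - 1"
        using 3 ne less.prems(5) by (simp_all add: z_def hd_butlast last_rev)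
      then show ?thesis using cycle_of_closed_walk[OF z] 3 by fastforce
    qed
  qed
qed

section \<open>A linear recurrence inequality\<close>

lemma recurrence_lower_bound:
  fixes V Q :: "nat \<Rightarrow> real"
  assumes x: "1 \<le> x" and Q: "\<And>j. 0 \<le> Q j" and V1: "d \<le> V 1"
    and rec: "\<And>j. 1 \<le> j \<Longrightarrow> x * V j - Q j \<le> V (Suc j)"
    and "1 \<le> n"
  shows "x ^ (n - 1) * (x * d - sum Q {1..n}) \<le> V (Suc n)"
  using \<open>1 \<le> n\<close>
proof (induction n rule: nat_induct_at_least)
  case base
  then show ?case using rec[of 1] V1 x by (simp add: mult_left_mono order_trans[rotated])
next
  case (Suc n)
  have "x ^ n * Q (Suc n) \<ge> Q (Suc n)"
    using Q[of "Suc n"] x by (simp add: mult_le_cancel_right1)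
  moreover have "x ^ n = x * x ^ (n - 1)"
    using Suc.hyps by (simp flip: power_Suc)
  moreover have "x * (x ^ (n - 1) * (x * d - sum Q {1..n})) \<le> x * V (Suc n)"
    using Suc.IH x by simp
  ultimately show ?case
    using rec[of "Suc n"] by (simp add: algebra_simps)
qed

lemma recurrence_sum_lower_bound:
  fixes V Q :: "nat \<Rightarrow> real"
  assumes x: "1 \<le> x" and Q: "\<And>j. 0 \<le> Q j" and V1: "d \<le> V 1"
    and rec: "\<And>j. 1 \<le> j \<Longrightarrow> x * V j - Q j \<le> V (Suc j)"
    and "1 \<le> n" and B: "sum Q {1..n - 1} \<le> B"
  shows "d + (x * d - B) * (\<Sum>i<n - 1. x ^ i) \<le> sum V {1..n}"
  using \<open>1 \<le> n\<close> B
proof (induction n rule: nat_induct_at_least)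
  case base
  then show ?case using V1 by simp
next
  case (Suc n)
  have "sum Q {1..n - 1} \<le> sum Q {1..n}"
    using Q by (intro sum_mono2) auto
  then have IH: "d + (x * d - B) * (\<Sum>i<n - 1. x ^ i) \<le> sum V {1..n}"
    using Suc by simp
  have "x ^ (n - 1) * (x * d - B) \<le> x ^ (n - 1) * (x * d - sum Q {1..n})"
    using Suc.prems x by (intro mult_left_mono) auto
  then have "x ^ (n - 1) * (x * d - B) \<le> V (Suc n)"
    using recurrence_lower_bound[where V = V and Q = Q, OF x Q V1 rec Suc.hyps] by linarith
  moreover have "(\<Sum>i<Suc n - 1. x ^ i) = (\<Sum>i<n - 1. x ^ i) + x ^ (n - 1)"
    using Suc.hyps by (simp add: Suc_diff_le flip: sum.lessThan_Suc)
  ultimately show ?case using IH by (simp add: algebra_simps)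
qed

section \<open>The walk tree of a trapping set\<close>

locale induced_tanner_subgraph =
  fixes L :: "'v set" and R :: "'c set" and E :: "('v \<times> 'c) set" and S :: "'v set"
    and dl g :: nat
  assumes tanner: "tanner_graph L R E" and regular: "left_regular L E dl"
    and degree: "2 \<le> dl" and girth: "has_girth E g" and S_subset: "S \<subseteq> L"
begin

definition sverts :: "('v + 'c) set" where
  "sverts = Inl ` S \<union> Inr ` nbhd E S"

definition sadj :: "'v + 'c \<Rightarrow> 'v + 'c \<Rightarrow> bool" where
  "sadj x y \<longleftrightarrow> tadj E x y \<and> x \<in> sverts \<and> y \<in> sverts"

definition snbrs :: "'v + 'c \<Rightarrow> ('v + 'c) set" where
  "snbrs x = {y. sadj x y}"

definition extensions :: "('v + 'c) list \<Rightarrow> ('v + 'c) set" where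
  "extensions w = {y. sadj (last w) y \<and> (2 \<le> length w \<longrightarrow> y \<noteq> w ! (length w - 2))}"

primrec nb_walks :: "'v + 'c \<Rightarrow> nat \<Rightarrow> ('v + 'c) list set" where
  "nb_walks r 0 = {[r]}"
| "nb_walks r (Suc j) = (\<Union>w\<in>nb_walks r j. (\<lambda>y. w @ [y]) ` extensions w)"

definition odd_end_walks :: "'v + 'c \<Rightarrow> nat \<Rightarrow> ('v + 'c) list set" where
  "odd_end_walks r j = {w \<in> nb_walks r j. last w \<in> Inr ` odd_nbhd E S}"

lemma finite_S: "finite S"
  using tanner S_subset finite_subset by (auto simp: tanner_graph_def)

lemma finite_nbhd: "finite (nbhd E S)"
proof -
  have "nbhd E S \<subseteq> R" using tanner by (auto simp: tanner_graph_def nbhd_def)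
  then show ?thesis using tanner finite_subset by (auto simp: tanner_graph_def)
qed

lemma finite_odd_nbhd: "finite (odd_nbhd E S)"
  using finite_nbhd by (simp add: odd_nbhd_def)

lemma finite_sverts: "finite sverts"
  using finite_S finite_nbhd by (simp add: sverts_def)

lemma sadj_sym: "sadj x y \<longleftrightarrow> sadj y x"
  by (auto simp: sadj_def tadj_sym)

lemma sadj_isl: "sadj x y \<Longrightarrow> isl x \<longleftrightarrow> \<not> isl y"
  by (cases x; cases y) (auto simp: sadj_def)

lemma snbrs_Inl: "v \<in> S \<Longrightarrow> snbrs (Inl v) = Inr ` {c. (v, c) \<in> E}"
  by (auto simp: snbrs_def sadj_def sverts_def nbhd_def elim: tadj.elims)

lemma snbrs_Inr: "snbrs (Inr c) = Inl ` {v \<in> S. (v, c) \<in> E}"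
  by (auto simp: snbrs_def sadj_def sverts_def nbhd_def elim: tadj.elims)

lemma card_snbrs_Inl: "v \<in> S \<Longrightarrow> card (snbrs (Inl v)) = dl"
  using regular S_subset by (auto simp: snbrs_Inl card_image left_regular_def)

lemma card_snbrs_Inr: "card (snbrs (Inr c)) = sdeg E S c"
  by (simp add: snbrs_Inr card_image sdeg_def)

lemma finite_snbrs: "finite (snbrs x)"
  using finite_sverts by (rule finite_subset[rotated]) (auto simp: snbrs_def sadj_def)

lemma finite_extensions: "finite (extensions w)"
  using finite_snbrs by (rule finite_subset[rotated]) (auto simp: snbrs_def extensions_def)

lemma card_extensions_ge: "card (snbrs (last w)) - 1 \<le> card (extensions w)"
proof -
  have "card (snbrs (last w)) - 1 \<le> card (snbrs (last w) - {w ! (length w - 2)})"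
    using finite_snbrs by (simp add: card_Diff_singleton_if)
  also have "\<dots> \<le> card (extensions w)"
    by (rule card_mono[OF finite_extensions]) (auto simp: snbrs_def extensions_def)
  finally show ?thesis .
qed

lemma extensions_singleton: "extensions [r] = snbrs r"
  by (auto simp: extensions_def snbrs_def)

lemma nb_walks_props:
  assumes "r \<in> sverts" "w \<in> nb_walks r j"
  shows "length w = Suc j \<and> hd w = r \<and> walk E w \<and> non_backtracking w \<and> last w \<in> sverts
    \<and> (isl (last w) \<longleftrightarrow> (isl r \<longleftrightarrow> even j))"
  using assms(2)
proof (induction j arbitrary: w)
  case 0
  then show ?case using assms(1) by (auto simp: walk_def non_backtracking_def)
next
  case (Suc j)
  then obtain w0 y where w: "w = w0 @ [y]" "w0 \<in> nb_walks r j" "y \<in> extensions w0" by auto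
  note IH = Suc.IH[OF w(2)]
  have adj: "sadj (last w0) y" using w(3) by (simp add: extensions_def)
  have "w0 \<noteq> []" using IH by auto
  have "walk E w" unfolding w(1)
    by (rule walk_append) (use IH adj in \<open>auto simp: walk_def sadj_def\<close>)
  moreover have "non_backtracking w" unfolding w(1)
    by (rule non_backtracking_append)
      (use IH w(3) \<open>w0 \<noteq> []\<close> in \<open>auto simp: non_backtracking_def extensions_def\<close>)
  moreover have "last w \<in> sverts" using adj w(1) by (simp add: sadj_def)
  moreover have "isl (last w) \<longleftrightarrow> (isl r \<longleftrightarrow> even (Suc j))"
    using sadj_isl[OF adj] IH w(1) by auto
  ultimately show ?case using IH w(1) \<open>w0 \<noteq> []\<close> by simp
qed

lemma finite_nb_walks: "finite (nb_walks r j)"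
  by (induction j) (auto simp: finite_extensions)

lemma nb_walks_SucD:
  "w \<in> nb_walks r (Suc j) \<Longrightarrow> butlast w \<in> nb_walks r j \<and> last w \<in> extensions (butlast w)"
  by auto

lemma nb_walks_not_Nil: "w \<in> nb_walks r j \<Longrightarrow> w \<noteq> []"
  by (cases j) auto

lemma card_nb_walks_Suc: "card (nb_walks r (Suc j)) = (\<Sum>w\<in>nb_walks r j. card (extensions w))"
proof -
  have "card (nb_walks r (Suc j)) = (\<Sum>w\<in>nb_walks r j. card ((\<lambda>y. w @ [y]) ` extensions w))"
    unfolding nb_walks.simps
    by (rule card_UN_disjoint) (auto simp: finite_nb_walks finite_extensions)
  also have "\<dots> = (\<Sum>w\<in>nb_walks r j. card (extensions w))"
    by (rule sum.cong) (auto intro: card_image inj_onI)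
  finally show ?thesis .
qed

lemma card_nb_walks_1: "card (nb_walks r 1) = card (snbrs r)"
  using card_nb_walks_Suc[of r 0] by (simp add: extensions_singleton)

declare nb_walks.simps(2)[simp del]

lemma girth_le_nb_walks:
  assumes r: "r \<in> sverts" and p: "p \<in> nb_walks r i" and q: "q \<in> nb_walks r j"
    and "p \<noteq> q" and "last p = last q"
  shows "g \<le> i + j"
proof -
  note P = nb_walks_props[OF r p] and Q = nb_walks_props[OF r q]
  obtain cy where "is_cycle E cy" "length cy + 2 \<le> length p + length q"
    using cycle_of_two_walks[of E p q] P Q assms(4,5) by auto
  then show ?thesis using girth P Q by (fastforce simp: has_girth_def)
qed

lemma last_nb_walks_disjoint:
  assumes r: "r \<in> sverts" and p: "p \<in> nb_walks r i" and q: "q \<in> nb_walks r j"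
    and "i \<noteq> j" "i + j < g"
  shows "last p \<noteq> last q"
proof
  assume "last p = last q"
  moreover have "p \<noteq> q" using nb_walks_props[OF r p] nb_walks_props[OF r q] \<open>i \<noteq> j\<close> by auto
  ultimately show False using girth_le_nb_walks[OF r p q] \<open>i + j < g\<close> by simp
qed

lemma card_UN_last_nb_walks:
  assumes r: "r \<in> sverts" and J: "finite J" and f: "inj_on f J"
    and short: "\<And>i j. i \<in> J \<Longrightarrow> j \<in> J \<Longrightarrow> f i + f j < g"
    and A: "\<And>j. j \<in> J \<Longrightarrow> A j \<subseteq> nb_walks r (f j)"
  shows "card (\<Union>j\<in>J. last ` A j) = (\<Sum>j\<in>J. card (A j))"
proof -
  have finite_A: "finite (A j)" if "j \<in> J" for j
    using A[OF that] finite_nb_walks by (rule finite_subset)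
  have "card (\<Union>j\<in>J. last ` A j) = (\<Sum>j\<in>J. card (last ` A j))"
  proof (rule card_UN_disjoint[OF J], use finite_A in blast, intro ballI impI)
    fix i j assume ij: "i \<in> J" "j \<in> J" "i \<noteq> j"
    then have "f i \<noteq> f j" using f by (auto dest: inj_onD)
    then show "last ` A i \<inter> last ` A j = {}"
      using last_nb_walks_disjoint[OF r] A[OF ij(1)] A[OF ij(2)] short[OF ij(1,2)] by blast
  qed
  also have "\<dots> = (\<Sum>j\<in>J. card (A j))"
  proof (rule sum.cong[OF refl], rule card_image, rule inj_onI, rule ccontr)
    fix j p q assume "j \<in> J" "p \<in> A j" "q \<in> A j" "last p = last q" "p \<noteq> q"
    then show False using girth_le_nb_walks[OF r, of p "f j" q "f j"] A short[of j j] by fastforce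
  qed
  finally show ?thesis .
qed

text \<open>Two walks of depth j+1 with the same end and the same predecessor coincide once 2j < g,
  so at most dl walks end at each variable node.\<close>
lemma card_nb_walks_le_ends:
  assumes r: "r \<in> sverts" and short: "2 * j < g"
    and vars: "\<And>w. w \<in> nb_walks r (Suc j) \<Longrightarrow> last w \<in> Inl ` S"
  shows "card (nb_walks r (Suc j)) \<le> dl * card (last ` nb_walks r (Suc j))"
proof -
  let ?W = "nb_walks r (Suc j)"
  have fibre: "card {w \<in> ?W. last w = y} \<le> dl" if "y \<in> last ` ?W" for y
  proof -
    from that have "y \<in> Inl ` S" using vars by blast
    then obtain v where v: "y = Inl v" "v \<in> S" by blast
    have "inj_on (\<lambda>w. last (butlast w)) {w \<in> ?W. last w = y}"
    proof (rule inj_onI)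
      fix p q assume p: "p \<in> {w \<in> ?W. last w = y}" and q: "q \<in> {w \<in> ?W. last w = y}"
        and eq: "last (butlast p) = last (butlast q)"
      have "butlast p \<in> nb_walks r j" "butlast q \<in> nb_walks r j"
        using p q nb_walks_SucD by blast+
      then have "butlast p = butlast q"
        using girth_le_nb_walks[OF r _ _ _ eq] short by (metis mult_2 not_le)
      moreover have "p \<noteq> []" "q \<noteq> []" "last p = last q"
        using p q nb_walks_not_Nil by auto
      ultimately show "p = q" by (metis append_butlast_last_id)
    qed
    moreover have "(\<lambda>w. last (butlast w)) ` {w \<in> ?W. last w = y} \<subseteq> snbrs y"
    proof clarify
      fix w assume "w \<in> ?W" "y = last w"
      then have "sadj (last (butlast w)) y" using nb_walks_SucD by (simp add: extensions_def)
      then show "last (butlast w) \<in> snbrs (last w)"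
        using \<open>y = last w\<close> by (simp add: snbrs_def sadj_sym)
    qed
    ultimately have "card {w \<in> ?W. last w = y} \<le> card (snbrs y)"
      by (rule card_inj_on_le[OF _ _ finite_snbrs])
    then show ?thesis using card_snbrs_Inl v by simp
  qed
  have "?W = (\<Union>y\<in>last ` ?W. {w \<in> ?W. last w = y})" by blast
  then have "card ?W \<le> (\<Sum>y\<in>last ` ?W. card {w \<in> ?W. last w = y})"
    using card_UN_le[where I = "last ` ?W" and A = "\<lambda>y. {w \<in> ?W. last w = y}"]
    by (simp add: finite_nb_walks)
  also have "\<dots> \<le> (\<Sum>y\<in>last ` ?W. dl)"
    using fibre by (rule sum_mono)
  also have "\<dots> = dl * card (last ` ?W)" by simp
  finally show ?thesis .
qed

lemma card_nb_walks_check_step: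
  assumes r: "r \<in> sverts" and "1 \<le> l" and checks: "\<And>w. w \<in> nb_walks r l \<Longrightarrow> \<not> isl (last w)"
  shows "card (nb_walks r l) \<le> card (nb_walks r (Suc l)) + card (odd_end_walks r l)"
proof -
  have one: "1 \<le> card (extensions w)" if w: "w \<in> nb_walks r l - odd_end_walks r l" for w
  proof -
    have "last w \<in> sverts" "\<not> isl (last w)" "last w \<notin> Inr ` odd_nbhd E S"
      using w checks nb_walks_props[OF r] by (auto simp: odd_end_walks_def)
    then obtain c where c: "last w = Inr c" "c \<in> nbhd E S" "c \<notin> odd_nbhd E S"
      by (auto simp: sverts_def)
    then have "sdeg E S c \<noteq> 0"
      using finite_S by (auto simp: sdeg_def nbhd_def)
    then have "2 \<le> sdeg E S c"
      using c by (auto simp: odd_nbhd_def)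
    then show ?thesis using card_extensions_ge[of w] c card_snbrs_Inr by simp
  qed
  have "card (nb_walks r l) - card (odd_end_walks r l) = card (nb_walks r l - odd_end_walks r l)"
    by (rule card_Diff_subset[symmetric])
      (auto simp: odd_end_walks_def intro: finite_subset[OF _ finite_nb_walks])
  also have "\<dots> = (\<Sum>w\<in>nb_walks r l - odd_end_walks r l. 1)" by simp
  also have "\<dots> \<le> (\<Sum>w\<in>nb_walks r l - odd_end_walks r l. card (extensions w))"
    using one by (rule sum_mono)
  also have "\<dots> \<le> (\<Sum>w\<in>nb_walks r l. card (extensions w))"
    by (rule sum_mono2) (auto simp: finite_nb_walks)
  also have "\<dots> = card (nb_walks r (Suc l))" by (rule card_nb_walks_Suc[symmetric])
  finally show ?thesis by linarith
qed

lemma card_nb_walks_var_step: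
  assumes r: "r \<in> sverts" and vars: "\<And>w. w \<in> nb_walks r l \<Longrightarrow> isl (last w)"
  shows "(dl - 1) * card (nb_walks r l) \<le> card (nb_walks r (Suc l))"
proof -
  have "dl - 1 \<le> card (extensions w)" if w: "w \<in> nb_walks r l" for w
  proof -
    obtain v where "last w = Inl v" "v \<in> S"
      using vars[OF w] nb_walks_props[OF r w] by (auto simp: sverts_def)
    then show ?thesis using card_extensions_ge[of w] card_snbrs_Inl by simp
  qed
  then have "(\<Sum>w\<in>nb_walks r l. dl - 1) \<le> (\<Sum>w\<in>nb_walks r l. card (extensions w))"
    by (rule sum_mono)
  then show ?thesis by (simp add: card_nb_walks_Suc mult.commute)
qed

lemma last_nb_walks_var:
  assumes "r \<in> sverts" "w \<in> nb_walks r l" "isl (last w)"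
  shows "last w \<in> Inl ` S"
  using nb_walks_props[OF assms(1,2)] assms(3) by (auto simp: sverts_def)

lemma sum_card_nb_walks_var_le:
  assumes r: "r \<in> sverts" and J: "finite J" and f: "inj_on f J"
    and short: "\<And>i j. i \<in> J \<Longrightarrow> j \<in> J \<Longrightarrow> f i + f j < g"
    and vars: "\<And>j w. j \<in> J \<Longrightarrow> w \<in> nb_walks r (f j) \<Longrightarrow> isl (last w)"
  shows "(\<Sum>j\<in>J. card (nb_walks r (f j))) \<le> card S"
proof -
  have "(\<Sum>j\<in>J. card (nb_walks r (f j))) = card (\<Union>j\<in>J. last ` nb_walks r (f j))"
    using card_UN_last_nb_walks[OF r J f short] by simp
  also have "\<dots> \<le> card (Inl ` S :: ('v + 'c) set)"
    using last_nb_walks_var[OF r] vars finite_S by (intro card_mono) auto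
  finally show ?thesis by (simp add: card_image)
qed

lemma sum_card_nb_walks_var_frac_le:
  assumes r: "r \<in> sverts" and J: "finite J" and f: "inj_on f J"
    and short: "\<And>i j. i \<in> J \<Longrightarrow> j \<in> J \<Longrightarrow> f i + f j < g"
    and vars: "\<And>j w. j \<in> J \<Longrightarrow> w \<in> nb_walks r (f j) \<Longrightarrow> isl (last w)"
    and t: "\<And>j. j \<in> J \<Longrightarrow> f j \<noteq> Suc t \<and> f j + Suc t < g" "2 * t < g"
    and vars_t: "\<And>w. w \<in> nb_walks r (Suc t) \<Longrightarrow> isl (last w)"
  shows "real (\<Sum>j\<in>J. card (nb_walks r (f j))) + card (nb_walks r (Suc t)) / dl \<le> card S"
proof -
  let ?X = "\<Union>j\<in>J. last ` nb_walks r (f j)" and ?Y = "last ` nb_walks r (Suc t)"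
  have "?X \<inter> ?Y = {}"
    using last_nb_walks_disjoint[OF r] t(1) by fastforce
  moreover have "?X \<union> ?Y \<subseteq> Inl ` S"
    using last_nb_walks_var[OF r] vars vars_t by blast
  ultimately have "card ?X + card ?Y \<le> card S"
    using card_mono[of "Inl ` S" "?X \<union> ?Y"] card_Un_disjoint[of ?X ?Y] J finite_S
    by (simp add: finite_nb_walks card_image)
  moreover have "card ?X = (\<Sum>j\<in>J. card (nb_walks r (f j)))"
    using card_UN_last_nb_walks[OF r J f short] by simp
  moreover have "card (nb_walks r (Suc t)) \<le> dl * card ?Y"
    using card_nb_walks_le_ends[OF r t(2)] last_nb_walks_var[OF r] vars_t by blast
  then have "real (card (nb_walks r (Suc t))) / dl \<le> card ?Y"
    using degree by (simp add: field_simps flip: of_nat_mult)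
  ultimately show ?thesis by linarith
qed

lemma sum_card_odd_end_walks_le:
  assumes r: "r \<in> sverts" and J: "finite J" and f: "inj_on f J"
    and short: "\<And>i j. i \<in> J \<Longrightarrow> j \<in> J \<Longrightarrow> f i + f j < g"
  shows "(\<Sum>j\<in>J. card (odd_end_walks r (f j))) \<le> card (odd_nbhd E S)"
proof -
  have "(\<Sum>j\<in>J. card (odd_end_walks r (f j))) = card (\<Union>j\<in>J. last ` odd_end_walks r (f j))"
    using card_UN_last_nb_walks[OF r J f short] by (simp add: odd_end_walks_def)
  also have "\<dots> \<le> card (Inr ` odd_nbhd E S :: ('v + 'c) set)"
    using finite_odd_nbhd by (intro card_mono) (auto simp: odd_end_walks_def)
  finally show ?thesis by (simp add: card_image)
qed

text \<open>Depths of the walk tree alternate between variable and check nodes; of_bool (isl r) is 1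
  exactly for a variable root. For j \<ge> 1, var_layer r j is the j-th layer of variable nodes and
  odd_check_layer r j the part of the following check layer ending at odd checks;
  odd_check_layer r 0 is the check layer next to the root, and for a variable root var_layer r 0
  is the root itself.\<close>

definition var_layer :: "'v + 'c \<Rightarrow> nat \<Rightarrow> ('v + 'c) list set" where
  "var_layer r j = nb_walks r (2 * j + of_bool (isl r) - 1)"

definition odd_check_layer :: "'v + 'c \<Rightarrow> nat \<Rightarrow> ('v + 'c) list set" where
  "odd_check_layer r j = odd_end_walks r (2 * j + of_bool (isl r))"

lemma isl_last_nb_walks:
  "r \<in> sverts \<Longrightarrow> w \<in> nb_walks r l \<Longrightarrow> isl (last w) \<longleftrightarrow> odd (l + of_bool (isl r))"
  using nb_walks_props[of r w l] by (cases "isl r") auto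

lemma card_var_layer_recurrence:
  assumes r: "r \<in> sverts" and "1 \<le> j"
  shows "(real dl - 1) * card (var_layer r j) - card (odd_check_layer r j)
    \<le> card (var_layer r (Suc j))"
proof -
  define l where "l = 2 * j + of_bool (isl r) - 1"
  have l: "var_layer r j = nb_walks r l" "odd_check_layer r j = odd_end_walks r (Suc l)"
    "var_layer r (Suc j) = nb_walks r (Suc (Suc l))"
    using \<open>1 \<le> j\<close> by (simp_all add: l_def var_layer_def odd_check_layer_def)
  have "(dl - 1) * card (nb_walks r l) \<le> card (nb_walks r (Suc l))"
    using isl_last_nb_walks[OF r] \<open>1 \<le> j\<close>
    by (intro card_nb_walks_var_step[OF r]) (auto simp: l_def)
  moreover have "real (dl - 1) = real dl - 1" using degree by simp
  ultimately have "(real dl - 1) * card (nb_walks r l) \<le> card (nb_walks r (Suc l))"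
    by (metis of_nat_le_iff of_nat_mult)
  moreover have "card (nb_walks r (Suc l))
      \<le> card (nb_walks r (Suc (Suc l))) + card (odd_end_walks r (Suc l))"
    using isl_last_nb_walks[OF r] \<open>1 \<le> j\<close>
    by (intro card_nb_walks_check_step[OF r]) (auto simp: l_def)
  then have "real (card (nb_walks r (Suc l)))
      \<le> card (nb_walks r (Suc (Suc l))) + card (odd_end_walks r (Suc l))"
    by (metis of_nat_le_iff)
  ultimately show ?thesis unfolding l by linarith
qed

lemma sum_card_odd_check_layer_le:
  assumes r: "r \<in> sverts" and short: "4 * m + 2 * of_bool (isl r) < g"
  shows "card (odd_check_layer r 0) + (\<Sum>j = 1..m. card (odd_check_layer r j))
    \<le> card (odd_nbhd E S)"
proof -
  have "(\<Sum>j = 0..m. card (odd_check_layer r j)) \<le> card (odd_nbhd E S)"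
    unfolding odd_check_layer_def
    by (rule sum_card_odd_end_walks_le[OF r]) (use short in \<open>auto simp: inj_on_def\<close>)
  then show ?thesis by (simp add: sum.atLeast_Suc_atMost)
qed

lemma sum_card_var_layer_le:
  assumes r: "r \<in> sverts" and short: "4 * n + 2 * of_bool (isl r) < g + 2"
  shows "of_bool (isl r) + (\<Sum>j = 1..n. card (var_layer r j)) \<le> card S"
proof -
  have "(\<Sum>j = 1 - of_bool (isl r)..n. card (var_layer r j)) \<le> card S"
    unfolding var_layer_def using isl_last_nb_walks[OF r] short
    by (intro sum_card_nb_walks_var_le[OF r]) (auto simp: inj_on_def)
  moreover have "(\<Sum>j = 1 - of_bool (isl r)..n. card (var_layer r j))
      = of_bool (isl r) + (\<Sum>j = 1..n. card (var_layer r j))"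
    by (cases "isl r") (simp_all add: sum.atLeast_Suc_atMost var_layer_def)
  ultimately show ?thesis by simp
qed

lemma sum_card_var_layer_frac_le:
  assumes r: "r \<in> sverts" and short: "4 * n + 2 * of_bool (isl r) < g"
  shows "of_bool (isl r) + (\<Sum>j = 1..n. real (card (var_layer r j)))
    + card (var_layer r (Suc n)) / dl \<le> card S"
proof -
  have depth: "2 * Suc n + of_bool (isl r) - 1 = Suc (2 * n + of_bool (isl r))" by simp
  have bound: "real (\<Sum>j = 1 - of_bool (isl r)..n. card (var_layer r j))
      + card (var_layer r (Suc n)) / dl \<le> card S"
    unfolding var_layer_def depth using isl_last_nb_walks[OF r] short
    by (intro sum_card_nb_walks_var_frac_le[OF r]) (auto simp: inj_on_def)
  have "(\<Sum>j = 1 - of_bool (isl r)..n. card (var_layer r j))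
      = of_bool (isl r) + (\<Sum>j = 1..n. card (var_layer r j))"
    by (cases "isl r") (simp_all add: sum.atLeast_Suc_atMost var_layer_def)
  then show ?thesis using bound by simp
qed

lemma walk_tree_growth:
  fixes d :: real
  assumes r: "r \<in> sverts" and d: "d \<le> card (var_layer r 1)"
  defines "B \<equiv> real (card (odd_nbhd E S)) - card (odd_check_layer r 0)"
  shows "1 \<le> n \<Longrightarrow> 4 * n + 2 * of_bool (isl r) < g + 4 \<Longrightarrow>
      d + ((real dl - 1) * d - B) * (\<Sum>i<n - 1. (real dl - 1) ^ i)
      \<le> (\<Sum>j = 1..n. real (card (var_layer r j)))"
    and "1 \<le> n \<Longrightarrow> 4 * n + 2 * of_bool (isl r) < g \<Longrightarrow>
      (real dl - 1) ^ (n - 1) * ((real dl - 1) * d - B) \<le> card (var_layer r (Suc n))"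
proof -
  let ?V = "\<lambda>j. real (card (var_layer r j))" and ?Q = "\<lambda>j. real (card (odd_check_layer r j))"
  have x: "1 \<le> real dl - 1" using degree by simp
  have rec: "\<And>j. 1 \<le> j \<Longrightarrow> (real dl - 1) * ?V j - ?Q j \<le> ?V (Suc j)"
    using card_var_layer_recurrence[OF r] by blast
  have Q_sum: "sum ?Q {1..m} \<le> B" if "4 * m + 2 * of_bool (isl r) < g" for m
    using sum_card_odd_check_layer_le[OF r that] unfolding B_def
    by (simp flip: of_nat_sum of_nat_add)
  show "d + ((real dl - 1) * d - B) * (\<Sum>i<n - 1. (real dl - 1) ^ i) \<le> sum ?V {1..n}"
    if "1 \<le> n" "4 * n + 2 * of_bool (isl r) < g + 4"
  proof -
    have "4 * (n - 1) + 2 * of_bool (isl r) < g" using that by arith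
    then show ?thesis
      by (intro recurrence_sum_lower_bound[where V = ?V and Q = ?Q, OF x _ d rec that(1) Q_sum])
        simp_all
  qed
  show "(real dl - 1) ^ (n - 1) * ((real dl - 1) * d - B) \<le> ?V (Suc n)"
    if "1 \<le> n" "4 * n + 2 * of_bool (isl r) < g"
  proof -
    have "(real dl - 1) ^ (n - 1) * ((real dl - 1) * d - B)
        \<le> (real dl - 1) ^ (n - 1) * ((real dl - 1) * d - sum ?Q {1..n})"
      using Q_sum[OF that(2)] x by (intro mult_left_mono) auto
    also have "\<dots> \<le> ?V (Suc n)"
      using recurrence_lower_bound[where V = ?V and Q = ?Q, OF x _ d rec that(1)] by simp
    finally show ?thesis .
  qed
qed

lemma walk_tree_bound:
  fixes d :: real
  assumes r: "r \<in> sverts" and d: "d \<le> card (var_layer r 1)"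
    and n: "1 \<le> n" "4 * n + 2 * of_bool (isl r) < g + 2"
  shows "of_bool (isl r) + d + ((real dl - 1) * d
      - (real (card (odd_nbhd E S)) - card (odd_check_layer r 0))) * (\<Sum>i<n - 1. (real dl - 1) ^ i)
    \<le> card S"
proof -
  have "real (of_bool (isl r) + (\<Sum>j = 1..n. card (var_layer r j))) \<le> card S"
    using sum_card_var_layer_le[OF r n(2)] by (simp only: of_nat_le_iff)
  then show ?thesis using walk_tree_growth(1)[OF r d n(1)] n(2) by simp
qed

lemma walk_tree_bound_frac:
  fixes d :: real
  assumes r: "r \<in> sverts" and d: "d \<le> card (var_layer r 1)"
    and n: "1 \<le> n" "4 * n + 2 * of_bool (isl r) < g"
  defines "B \<equiv> real (card (odd_nbhd E S)) - card (odd_check_layer r 0)"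
  shows "of_bool (isl r) + d + ((real dl - 1) * d - B) * (\<Sum>i<n - 1. (real dl - 1) ^ i)
      + (real dl - 1) ^ (n - 1) * ((real dl - 1) * d - B) / dl \<le> card S"
proof -
  have "(real dl - 1) ^ (n - 1) * ((real dl - 1) * d - B) / dl \<le> card (var_layer r (Suc n)) / dl"
    using walk_tree_growth(2)[OF r d n] degree unfolding B_def by (simp add: divide_right_mono)
  then show ?thesis
    using walk_tree_growth(1)[OF r d n(1)] sum_card_var_layer_frac_le[OF r n(2)] n(2)
    unfolding B_def by simp
qed

lemma check_root_layers:
  assumes "c \<in> nbhd E S"
  shows "Inr c \<in> sverts" and "card (var_layer (Inr c) 1) = sdeg E S c"
    and "card (odd_check_layer (Inr c) 0) = of_bool (c \<in> odd_nbhd E S)"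
proof -
  show "Inr c \<in> sverts" using assms by (simp add: sverts_def)
  show "card (var_layer (Inr c) 1) = sdeg E S c"
    using card_nb_walks_1[of "Inr c"] card_snbrs_Inr by (simp add: var_layer_def)
  have "odd_check_layer (Inr c) 0 = (if c \<in> odd_nbhd E S then {[Inr c]} else {})"
    by (auto simp: odd_check_layer_def odd_end_walks_def)
  then show "card (odd_check_layer (Inr c) 0) = of_bool (c \<in> odd_nbhd E S)" by simp
qed

lemma var_root_layers:
  assumes v: "v \<in> S" and no_odd: "\<And>c. (v, c) \<in> E \<Longrightarrow> c \<notin> odd_nbhd E S"
  shows "Inl v \<in> sverts" and "odd_check_layer (Inl v) 0 = {}"
    and "dl \<le> card (var_layer (Inl v) 1)"
proof -
  show r: "Inl v \<in> sverts" using v by (simp add: sverts_def)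
  have "last w \<in> snbrs (Inl v)" if "w \<in> nb_walks (Inl v) 1" for w
    using that nb_walks_SucD[of w "Inl v" 0] by (auto simp: extensions_singleton)
  then show empty: "odd_check_layer (Inl v) 0 = {}"
    using no_odd by (fastforce simp: odd_check_layer_def odd_end_walks_def snbrs_Inl[OF v])
  have "card (nb_walks (Inl v) 1) \<le> card (nb_walks (Inl v) (Suc 1)) + card (odd_end_walks (Inl v) 1)"
    using isl_last_nb_walks[OF r] by (intro card_nb_walks_check_step[OF r]) auto
  then show "dl \<le> card (var_layer (Inl v) 1)"
    using empty card_nb_walks_1[of "Inl v"] card_snbrs_Inl[OF v]
    by (simp add: var_layer_def odd_check_layer_def numeral_2_eq_2)
qed

lemma check_root_bounds:
  assumes c: "c \<in> nbhd E S" and n: "1 \<le> n"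
  defines "D \<equiv> (real dl - 1) * sdeg E S c
    - (real (card (odd_nbhd E S)) - of_bool (c \<in> odd_nbhd E S))"
  shows "4 * n < g + 2 \<Longrightarrow> sdeg E S c + D * (\<Sum>i<n - 1. (real dl - 1) ^ i) \<le> card S"
    and "4 * n < g \<Longrightarrow> sdeg E S c + D * (\<Sum>i<n - 1. (real dl - 1) ^ i)
      + (real dl - 1) ^ (n - 1) * D / dl \<le> card S"
proof -
  note r = check_root_layers(1)[OF c]
  have d: "real (sdeg E S c) \<le> card (var_layer (Inr c) 1)"
    using check_root_layers(2)[OF c] by simp
  have B: "real (card (odd_nbhd E S)) - card (odd_check_layer (Inr c) 0)
      = real (card (odd_nbhd E S)) - of_bool (c \<in> odd_nbhd E S)"
    using check_root_layers(3)[OF c] by simp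
  show "4 * n < g + 2 \<Longrightarrow> sdeg E S c + D * (\<Sum>i<n - 1. (real dl - 1) ^ i) \<le> card S"
    using walk_tree_bound[OF r d n] unfolding B D_def by simp
  show "4 * n < g \<Longrightarrow> sdeg E S c + D * (\<Sum>i<n - 1. (real dl - 1) ^ i)
      + (real dl - 1) ^ (n - 1) * D / dl \<le> card S"
    using walk_tree_bound_frac[OF r d n] unfolding B D_def by simp
qed

lemma var_root_bounds:
  assumes v: "v \<in> S" "\<And>c. (v, c) \<in> E \<Longrightarrow> c \<notin> odd_nbhd E S" and n: "1 \<le> n"
  defines "D \<equiv> (real dl - 1) * dl - card (odd_nbhd E S)"
  shows "4 * n < g \<Longrightarrow> 1 + dl + D * (\<Sum>i<n - 1. (real dl - 1) ^ i) \<le> card S"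
    and "4 * n + 2 < g \<Longrightarrow> 1 + dl + D * (\<Sum>i<n - 1. (real dl - 1) ^ i)
      + (real dl - 1) ^ (n - 1) * D / dl \<le> card S"
proof -
  note r = var_root_layers(1)[OF v]
  have d: "real dl \<le> card (var_layer (Inl v) 1)"
    using var_root_layers(3)[OF v] by simp
  show "4 * n < g \<Longrightarrow> 1 + dl + D * (\<Sum>i<n - 1. (real dl - 1) ^ i) \<le> card S"
    using walk_tree_bound[OF r d n] by (simp add: D_def var_root_layers(2)[OF v])
  show "4 * n + 2 < g \<Longrightarrow> 1 + dl + D * (\<Sum>i<n - 1. (real dl - 1) ^ i)
      + (real dl - 1) ^ (n - 1) * D / dl \<le> card S"
    using walk_tree_bound_frac[OF r d n] by (simp add: D_def var_root_layers(2)[OF v])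
qed

end

text \<open>In an elementary set every odd check has a single neighbour in S, so choosing an odd
  neighbour for each variable node would be injective.\<close>
lemma elementary_var_without_odd_checks:
  assumes el: "elementary E S" and fin: "finite (odd_nbhd E S)"
    and less: "card (odd_nbhd E S) < card S"
  shows "\<exists>v\<in>S. \<forall>c. (v, c) \<in> E \<longrightarrow> c \<notin> odd_nbhd E S"
proof (rule ccontr)
  assume "\<not> ?thesis"
  then have "\<forall>v\<in>S. \<exists>c. (v, c) \<in> E \<and> c \<in> odd_nbhd E S" by blast
  then obtain f where f: "\<And>v. v \<in> S \<Longrightarrow> (v, f v) \<in> E \<and> f v \<in> odd_nbhd E S"
    by (auto dest!: bchoice)
  have "inj_on f S"
  proof (rule inj_onI)
    fix u v assume uv: "u \<in> S" "v \<in> S" "f u = f v"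
    then have "f u \<in> nbhd E S" "odd (sdeg E S (f u))"
      using f by (auto simp: odd_nbhd_def)
    then have "sdeg E S (f u) = 1"
      using el by (auto simp: elementary_def)
    then obtain x where x: "{w \<in> S. (w, f u) \<in> E} = {x}"
      unfolding sdeg_def by (rule card_1_singletonE)
    have "u \<in> {w \<in> S. (w, f u) \<in> E}" "v \<in> {w \<in> S. (w, f u) \<in> E}"
      using f[OF uv(1)] f[OF uv(2)] uv by auto
    then show "u = v" unfolding x by simp
  qed
  then have "card S \<le> card (odd_nbhd E S)"
    using f fin by (intro card_inj_on_le) auto
  then show False using less by simp
qed

theorem lemma7:
  fixes L :: "'v set" and R :: "'c set" and E :: "('v \<times> 'c) set"
    and dl g a b :: nat and S :: "'v set"
  assumes "tanner_graph L R E"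
    and "left_regular L E dl" and "dl \<ge> 3"
    and "has_girth E g" and "g > 4"
    and "trapping_set L E S a b" and "b < a"
    and "induced_connected E S"
  shows
   "(\<forall>k::nat. g = 4 * k \<and> k > 1 \<longrightarrow>
      ((elementary E S \<and> dl * (dl - 1) > b \<longrightarrow>
         real a \<ge> 1 + real dl + (real dl * (real dl - 1) - real b) * (\<Sum>i<k-2. (real dl - 1) ^ i)
                  + (real dl * (real dl - 1) - real b) * (real dl - 1) ^ (k - 2) / real dl)
     \<and> (\<forall>c d_o. c \<in> odd_nbhd E S \<and> sdeg E S c = d_o \<and> d_o > 1 \<and> d_o * (dl - 1) > b \<longrightarrow>
         real a \<ge> real d_o + (real d_o * (real dl - 1) - real b + 1) * (\<Sum>i<k-1. (real dl - 1) ^ i))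
     \<and> (\<forall>c d_e. c \<in> even_nbhd E S \<and> sdeg E S c = d_e \<and> d_e > 2 \<and> d_e * (dl - 1) > b \<longrightarrow>
         real a \<ge> real d_e + (real d_e * (real dl - 1) - real b) * (\<Sum>i<k-1. (real dl - 1) ^ i))))
  \<and> (\<forall>k::nat. g = 4 * k + 2 \<and> k > 0 \<longrightarrow>
      ((elementary E S \<and> dl * (dl - 1) > b \<longrightarrow>
         real a \<ge> 1 + real dl + (real dl * (real dl - 1) - real b) * (\<Sum>i<k-1. (real dl - 1) ^ i))
     \<and> (\<forall>c d_o. c \<in> odd_nbhd E S \<and> sdeg E S c = d_o \<and> d_o > 1 \<and> d_o * (dl - 1) > b \<longrightarrow>
         real a \<ge> real d_o + (real d_o * (real dl - 1) - real b + 1) * (\<Sum>i<k-1. (real dl - 1) ^ i)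
                  + (real d_o * (real dl - 1) - real b + 1) * (real dl - 1) ^ (k - 1) / real dl)
     \<and> (\<forall>c d_e. c \<in> even_nbhd E S \<and> sdeg E S c = d_e \<and> d_e > 2 \<and> d_e * (dl - 1) > b \<longrightarrow>
         real a \<ge> real d_e + (real d_e * (real dl - 1) - real b) * (\<Sum>i<k-1. (real dl - 1) ^ i)
                  + (real d_e * (real dl - 1) - real b) * (real dl - 1) ^ (k - 1) / real dl)))"
proof -
  have S: "S \<subseteq> L" and a: "card S = a" and b: "card (odd_nbhd E S) = b"
    using assms(6) by (auto simp: trapping_set_def)
  interpret induced_tanner_subgraph L R E S dl g
    using assms(1-4) S by unfold_locales auto
  have root: "\<exists>v\<in>S. \<forall>c. (v, c) \<in> E \<longrightarrow> c \<notin> odd_nbhd E S" if "elementary E S"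
    using elementary_var_without_odd_checks[OF that finite_odd_nbhd] assms(7) a b by simp
  have odd: "c \<in> nbhd E S" "of_bool (c \<in> odd_nbhd E S) = 1" if "c \<in> odd_nbhd E S" for c
    using that by (simp_all add: odd_nbhd_def)
  have even: "c \<in> nbhd E S" "of_bool (c \<in> odd_nbhd E S) = 0" if "c \<in> even_nbhd E S" for c
    using that by (auto simp: even_nbhd_def odd_nbhd_def)
  show ?thesis
  proof (intro conjI allI impI; elim conjE)
    fix k assume "g = 4 * k" "1 < k" "elementary E S"
    with root var_root_bounds(2)[of _ "k - 1"] show "real a \<ge> 1 + real dl
        + (real dl * (real dl - 1) - real b) * (\<Sum>i<k-2. (real dl - 1) ^ i)
        + (real dl * (real dl - 1) - real b) * (real dl - 1) ^ (k - 2) / real dl"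
      by (fastforce simp: a b algebra_simps numeral_2_eq_2)
  next
    fix k c d_o assume "g = 4 * k" "1 < k" "c \<in> odd_nbhd E S" "sdeg E S c = d_o"
    with odd check_root_bounds(1)[of c k] show "real a \<ge> real d_o
        + (real d_o * (real dl - 1) - real b + 1) * (\<Sum>i<k-1. (real dl - 1) ^ i)"
      by (simp add: a b algebra_simps)
  next
    fix k c d_e assume "g = 4 * k" "1 < k" "c \<in> even_nbhd E S" "sdeg E S c = d_e"
    with even check_root_bounds(1)[of c k] show "real a \<ge> real d_e
        + (real d_e * (real dl - 1) - real b) * (\<Sum>i<k-1. (real dl - 1) ^ i)"
      by (simp add: a b algebra_simps)
  next
    fix k assume "g = 4 * k + 2" "0 < k" "elementary E S"
    with root var_root_bounds(1)[of _ k] show "real a \<ge> 1 + real dl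
        + (real dl * (real dl - 1) - real b) * (\<Sum>i<k-1. (real dl - 1) ^ i)"
      by (fastforce simp: a b algebra_simps)
  next
    fix k c d_o assume "g = 4 * k + 2" "0 < k" "c \<in> odd_nbhd E S" "sdeg E S c = d_o"
    with odd check_root_bounds(2)[of c k] show "real a \<ge> real d_o
        + (real d_o * (real dl - 1) - real b + 1) * (\<Sum>i<k-1. (real dl - 1) ^ i)
        + (real d_o * (real dl - 1) - real b + 1) * (real dl - 1) ^ (k - 1) / real dl"
      by (simp add: a b algebra_simps)
  next
    fix k c d_e assume "g = 4 * k + 2" "0 < k" "c \<in> even_nbhd E S" "sdeg E S c = d_e"
    with even check_root_bounds(2)[of c k] show "real a \<ge> real d_e
        + (real d_e * (real dl - 1) - real b) * (\<Sum>i<k-1. (real dl - 1) ^ i)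
        + (real d_e * (real dl - 1) - real b) * (real dl - 1) ^ (k - 1) / real dl"
      by (simp add: a b algebra_simps)
  qed
qed

end
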